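(* Let $(F_k)_{k\geq1}$ be a sequence of cumulative distribution functions on $\mathbb{R}$ and $F$ a cumulative distribution function such that $F_k(x)^k\to F(x)$ as $k\to\infty$ at every point $x$ where $F$ is continuous. Then at every such $x$, $F_k^{\Box\!\vee k}(x)\to\max(0,1+\log F(x))$ as $k\to\infty$.
   Context: For cumulative distribution functions $F,G$, the free upper extremal convolution is $F\,\Box\!\vee\, G=\max(0,F+G-1)$ (pointwise), and $F^{\Box\!\vee k}=F\,\Box\!\vee\cdots\Box\!\vee\, F$ ($k$ factors, taken iteratively). Convention: $\log 0=-\infty$, so $\max(0,1+\log 0)=0$. *)

theory Defs
  imports "HOL-Analysis.Analysis"
begin

definition is_cdf :: "(real \<Rightarrow> real) \<Rightarrow> bool" where
  "is_cdf F \<longleftrightarrow> mono F \<and> (\<forall>x. continuous (at_right x) F)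
     \<and> (F \<longlongrightarrow> 0) at_bot \<and> (F \<longlongrightarrow> 1) at_top"

definition box_vee :: "(real \<Rightarrow> real) \<Rightarrow> (real \<Rightarrow> real) \<Rightarrow> real \<Rightarrow> real" where
  "box_vee F G = (\<lambda>x. max 0 (F x + G x - 1))"

fun box_vee_pow :: "(real \<Rightarrow> real) \<Rightarrow> nat \<Rightarrow> real \<Rightarrow> real" where
  "box_vee_pow F 0 = F"
| "box_vee_pow F (Suc 0) = F"
| "box_vee_pow F (Suc (Suc n)) = box_vee (box_vee_pow F (Suc n)) F"

text \<open>max(0, 1 + log t) with the convention log 0 = -infinity.\<close>
definition max0_1_log :: "real \<Rightarrow> real" where
  "max0_1_log t = (if t = 0 then 0 else max 0 (1 + ln t))"

end

theory Submission
  imports Defs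
begin

text \<open>On values in \<open>[0,1]\<close> the operation \<open>\<Box>\<vee>\<close> is truncated addition of defects \<open>1 - G x\<close>, so
  \<open>G\<^sup>\<Box>\<^sup>\<vee>\<^sup>k x = max 0 (1 - k (1 - G x))\<close>. Writing \<open>g\<^sub>k = F\<^sub>k x\<close>, the hypothesis \<open>g\<^sub>k\<^sup>k \<rightarrow> L = F x\<close>
  forces \<open>k (1 - g\<^sub>k) \<rightarrow> -ln L\<close> when \<open>L > 0\<close>, because \<open>-k ln g\<^sub>k \<rightarrow> -ln L\<close>, \<open>g\<^sub>k \<rightarrow> 1\<close> and
  \<open>1 - g \<le> -ln g \<le> (1 - g) / g\<close>. When \<open>L = 0\<close>, Bernoulli's inequality
  \<open>1 - k (1 - g) \<le> g\<^sup>k\<close> squeezes the truncated sequence to \<open>0\<close>.\<close>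

lemma is_cdf_bounds:
  assumes "is_cdf G"
  shows "0 \<le> G x" "G x \<le> 1"
proof -
  have mono: "mono G" and bot: "(G \<longlongrightarrow> 0) at_bot" and top: "(G \<longlongrightarrow> 1) at_top"
    using assms unfolding is_cdf_def by auto
  have "eventually (\<lambda>y. G y \<le> G x) at_bot"
    unfolding eventually_at_bot_linorder using mono by (auto simp: mono_def)
  then show "0 \<le> G x" using tendsto_upperbound[OF bot] by auto
  have "eventually (\<lambda>y. G x \<le> G y) at_top"
    unfolding eventually_at_top_linorder using mono by (auto simp: mono_def)
  then show "G x \<le> 1" using tendsto_lowerbound[OF top] by auto
qed

lemma box_vee_pow_Suc_eq:
  assumes "0 \<le> G x" "G x \<le> 1"
  shows "box_vee_pow G (Suc n) x = max 0 (1 - real (Suc n) * (1 - G x))"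
proof (induction n)
  case (Suc n)
  then show ?case using assms by (simp add: box_vee_def max_def algebra_simps)
qed (use assms in simp)

lemma one_minus_mult_le_power:
  fixes g :: real
  assumes "0 \<le> g"
  shows "1 - real n * (1 - g) \<le> g ^ n"
  using Bernoulli_inequality[of "g - 1" n] assms by (simp add: algebra_simps)

lemma mult_ln_tendsto_imp_tendsto_one:
  fixes g :: "nat \<Rightarrow> real"
  assumes pos: "eventually (\<lambda>k. 0 < g k) sequentially"
    and lim: "(\<lambda>k. real k * ln (g k)) \<longlonglongrightarrow> l"
  shows "g \<longlonglongrightarrow> 1"
proof -
  have "(\<lambda>k. real k * ln (g k) * inverse (real k)) \<longlonglongrightarrow> l * 0"
    by (intro tendsto_mult lim tendsto_inverse_0_at_top filterlim_real_sequentially)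
  then have "(\<lambda>k. exp (real k * ln (g k) * inverse (real k))) \<longlonglongrightarrow> exp (l * 0)"
    by (rule tendsto_exp)
  moreover have "eventually (\<lambda>k. exp (real k * ln (g k) * inverse (real k)) = g k) sequentially"
    using pos eventually_gt_at_top[of 0] by eventually_elim (simp add: field_simps)
  ultimately show ?thesis by (simp add: Lim_transform_eventually)
qed

lemma scaled_defect_tendsto_minus_ln:
  fixes g :: "nat \<Rightarrow> real"
  assumes bounds: "eventually (\<lambda>k. 0 \<le> g k) sequentially"
    and lim: "(\<lambda>k. g k ^ k) \<longlonglongrightarrow> L" and "0 < L"
  shows "(\<lambda>k. real k * (1 - g k)) \<longlonglongrightarrow> - ln L"
proof -
  have "eventually (\<lambda>k. 0 < g k ^ k) sequentially"
    using lim \<open>0 < L\<close> by (rule order_tendstoD)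
  then have pos: "eventually (\<lambda>k. 0 < g k) sequentially"
    using bounds eventually_gt_at_top[of 0]
    by eventually_elim (auto simp: le_less power_0_left)
  define a where "a k = - (real k * ln (g k))" for k
  have "(\<lambda>k. ln (g k ^ k)) \<longlonglongrightarrow> ln L"
    using lim \<open>0 < L\<close> by (intro tendsto_ln) auto
  moreover have "eventually (\<lambda>k. ln (g k ^ k) = real k * ln (g k)) sequentially"
    using pos by eventually_elim (simp add: ln_realpow)
  ultimately have k_ln: "(\<lambda>k. real k * ln (g k)) \<longlonglongrightarrow> ln L"
    by (rule Lim_transform_eventually)
  then have a: "a \<longlonglongrightarrow> - ln L"
    unfolding a_def by (rule tendsto_minus)
  have lower_lim: "(\<lambda>k. g k * a k) \<longlonglongrightarrow> - ln L"
    using tendsto_mult[OF mult_ln_tendsto_imp_tendsto_one[OF pos k_ln] a] by simp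
  have lower: "eventually (\<lambda>k. g k * a k \<le> real k * (1 - g k)) sequentially"
    using pos
  proof eventually_elim
    case (elim k)
    have "- ln (g k) \<le> 1 / g k - 1"
      using ln_le_minus_one[of "1 / g k"] elim by (simp add: ln_div)
    then have "g k * - ln (g k) \<le> g k * (1 / g k - 1)"
      using elim by (intro mult_left_mono) auto
    also have "\<dots> = 1 - g k"
      using elim by (simp add: field_simps)
    finally have "real k * (g k * - ln (g k)) \<le> real k * (1 - g k)"
      by (intro mult_left_mono) auto
    then show ?case by (simp add: a_def algebra_simps)
  qed
  have upper: "eventually (\<lambda>k. real k * (1 - g k) \<le> a k) sequentially"
    using pos
  proof eventually_elim
    case (elim k)
    have "real k * ln (g k) \<le> real k * (g k - 1)"
      using elim by (intro mult_left_mono ln_le_minus_one) auto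
    then show ?case by (simp add: a_def algebra_simps)
  qed
  show ?thesis
    by (rule tendsto_sandwich[OF lower upper lower_lim a])
qed

lemma truncated_scaled_defect_tendsto:
  fixes g :: "nat \<Rightarrow> real"
  assumes bounds: "eventually (\<lambda>k. 0 \<le> g k) sequentially"
    and lim: "(\<lambda>k. g k ^ k) \<longlonglongrightarrow> L"
  shows "(\<lambda>k. max 0 (1 - real k * (1 - g k))) \<longlonglongrightarrow> max0_1_log L"
proof (cases "L = 0")
  case True
  have lower: "eventually (\<lambda>k. 0 \<le> max 0 (1 - real k * (1 - g k))) sequentially"
    by simp
  have upper: "eventually (\<lambda>k. max 0 (1 - real k * (1 - g k)) \<le> g k ^ k) sequentially"
    using bounds by (rule eventually_mono) (simp add: one_minus_mult_le_power)
  show ?thesis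
    using tendsto_sandwich[OF lower upper tendsto_const lim[unfolded True]] True
    by (simp add: max0_1_log_def)
next
  case False
  have "eventually (\<lambda>k. 0 \<le> g k ^ k) sequentially"
    using bounds by (rule eventually_mono) simp
  then have "0 \<le> L"
    by (rule tendsto_lowerbound[OF lim]) simp
  with False have "0 < L" by simp
  have "(\<lambda>k. max 0 (1 - real k * (1 - g k))) \<longlonglongrightarrow> max 0 (1 - - ln L)"
    using scaled_defect_tendsto_minus_ln[OF bounds lim \<open>0 < L\<close>]
    by (intro tendsto_max tendsto_diff tendsto_const)
  with False show ?thesis by (simp add: max0_1_log_def)
qed

theorem mainTheorem7:
  fixes Fs :: "nat \<Rightarrow> real \<Rightarrow> real" and F :: "real \<Rightarrow> real"
  assumes cdfs: "\<And>k. k \<ge> 1 \<Longrightarrow> is_cdf (Fs k)"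
    and cdf: "is_cdf F"
    and conv: "\<And>x. isCont F x \<Longrightarrow> (\<lambda>k. Fs k x ^ k) \<longlonglongrightarrow> F x"
  shows "\<And>x. isCont F x \<Longrightarrow> (\<lambda>k. box_vee_pow (Fs k) k x) \<longlonglongrightarrow> max0_1_log (F x)"
proof -
  fix x assume "isCont F x"
  have bounds: "eventually (\<lambda>k. 0 \<le> Fs k x \<and> Fs k x \<le> 1) sequentially"
    using eventually_ge_at_top[of 1] by (rule eventually_mono) (simp add: is_cdf_bounds cdfs)
  have "eventually (\<lambda>k. 0 \<le> Fs k x) sequentially"
    using bounds by (rule eventually_mono) simp
  from truncated_scaled_defect_tendsto[OF this conv[OF \<open>isCont F x\<close>]]
  have "(\<lambda>k. max 0 (1 - real k * (1 - Fs k x))) \<longlonglongrightarrow> max0_1_log (F x)" .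
  moreover have "eventually (\<lambda>k. max 0 (1 - real k * (1 - Fs k x)) = box_vee_pow (Fs k) k x)
      sequentially"
    using bounds eventually_ge_at_top[of 1]
  proof eventually_elim
    case (elim k)
    then obtain n where "k = Suc n" by (cases k) auto
    with elim show ?case by (simp add: box_vee_pow_Suc_eq)
  qed
  ultimately show "(\<lambda>k. box_vee_pow (Fs k) k x) \<longlonglongrightarrow> max0_1_log (F x)"
    by (rule Lim_transform_eventually)
qed

end
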